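(* For every integer $h \geq 3$ and every positive integer $N$, \[ \psi(N,h,h) \geq \frac{1}{\cos(\pi/h)} \left( \frac{4}{3 - \cos(\pi/h)} - 1 \right). \]
   Context: $[N] = \{1,2,\dots,N\}$. For positive integers $K$ and $h \geq 3$, let $\mathcal{F}_{K,h}$ be the set of all functions $F(x) = \sum_{j=1}^K b_j \cos(jx)$ with real coefficients satisfying $\sum_{j=1}^K |b_j| = \frac{1}{\cos(\pi/h)}$. For nonempty $A \subseteq [N]$ and $F \in \mathcal{F}_{K,h}$ let $w_F(A) = \sum_{a \in A} F\!\left( \left(a - \frac{N+1}{2}\right) \frac{2\pi}{hN} \right)$, and let \[ \psi(N,K,h) = \min_{\emptyset \neq A \subseteq [N]} \sup \left\{ \frac{w_F(A)}{|A|} : F \in \mathcal{F}_{K,h} \right\}. \] *)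

theory Defs
  imports "HOL-Analysis.Analysis"
begin

definition cospoly :: "nat \<Rightarrow> (nat \<Rightarrow> real) \<Rightarrow> real \<Rightarrow> real" where
  "cospoly K b x = (\<Sum>j=1..K. b j * cos (real j * x))"

definition Fam :: "nat \<Rightarrow> nat \<Rightarrow> (real \<Rightarrow> real) set" where
  "Fam K h = {F. \<exists>b::nat \<Rightarrow> real. (\<Sum>j=1..K. \<bar>b j\<bar>) = 1 / cos (pi / real h)
                                  \<and> F = cospoly K b}"

definition wF :: "nat \<Rightarrow> nat \<Rightarrow> (real \<Rightarrow> real) \<Rightarrow> nat set \<Rightarrow> real" where
  "wF N h F A = (\<Sum>a\<in>A. F ((real a - (real N + 1) / 2) * (2 * pi / (real h * real N))))"

definition psi :: "nat \<Rightarrow> nat \<Rightarrow> nat \<Rightarrow> real" where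
  "psi N K h = Min ((\<lambda>A. Sup ((\<lambda>F. wF N h F A / real (card A)) ` Fam K h))
                     ` {A. A \<subseteq> {1..N} \<and> A \<noteq> {}})"

end

theory Submission
  imports Defs
begin

text \<open>
  Write \<open>c = cos (\<pi>/h)\<close> and \<open>T = (1 + c) / (3 - c)\<close>, so the bound is \<open>T / c\<close>.
  All sample points \<open>x\<^sub>a\<close> lie in \<open>[-\<pi>/h, \<pi>/h]\<close>, where
  \<open>cos x \<ge> c + (1 - c) (1 + cos (h x)) / 2\<close>; with \<open>p = |x|/2\<close> this is
  \<open>sin p \<le> sin (\<pi>/(2h)) sin (h p)\<close>, which holds because \<open>sin (h p) / sin p\<close> is a sum of
  cosines that decrease on \<open>[0, \<pi>/(2h)]\<close>.  Test \<open>A\<close> with \<open>F = cos x / c\<close> and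
  \<open>F = - cos (h x) / c\<close>: if the average of \<open>cos (h x\<^sub>a)\<close> is at most \<open>-T\<close>, the second
  function has average at least \<open>T / c\<close>; otherwise the pointwise bound gives the first
  one average at least \<open>T / c\<close>.
\<close>

lemma sin_nat_mult_eq_sin_mult_sum_cos:
  "sin (real h * p) = sin p * (\<Sum>k<h. cos ((real h - 1 - 2 * real k) * p))"
proof -
  define g where "g k = sin ((real h - 2 * real k) * p)" for k :: nat
  have step: "g k - g (Suc k) = 2 * sin p * cos ((real h - 1 - 2 * real k) * p)" for k
  proof -
    have "g k - g (Suc k) = 2 * sin ((((real h - 2 * real k) * p) - ((real h - 2 * real (Suc k)) * p)) / 2)
       * cos ((((real h - 2 * real k) * p) + ((real h - 2 * real (Suc k)) * p)) / 2)"
      unfolding g_def by (rule sin_diff_sin)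
    also have "(((real h - 2 * real k) * p) - ((real h - 2 * real (Suc k)) * p)) / 2 = p"
      by (simp add: algebra_simps)
    also have "(((real h - 2 * real k) * p) + ((real h - 2 * real (Suc k)) * p)) / 2
             = (real h - 1 - 2 * real k) * p"
      by (simp add: field_simps)
    finally show ?thesis .
  qed
  have "2 * sin (real h * p) = g 0 - g h"
    by (simp add: g_def algebra_simps)
  also have "\<dots> = (\<Sum>k<h. g k - g (Suc k))"
    by (rule sum_lessThan_telescope'[symmetric])
  also have "\<dots> = 2 * (sin p * (\<Sum>k<h. cos ((real h - 1 - 2 * real k) * p)))"
    by (simp add: step sum_distrib_left mult.assoc)
  finally show ?thesis by simp
qed

lemma sin_le_sin_pi_half_div_mult_sin_nat_mult:
  assumes "h \<ge> 1" and "0 \<le> p" and "p \<le> pi / (2 * real h)"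
  shows "sin p \<le> sin (pi / (2 * real h)) * sin (real h * p)"
proof -
  define a where "a = pi / (2 * real h)"
  define S where "S q = (\<Sum>k<h. cos ((real h - 1 - 2 * real k) * q))" for q
  have a0: "0 < a" and ha: "real h * a = pi / 2" and "a \<le> pi"
    using assms(1) pi_gt_zero by (auto simp: a_def field_simps)
  have sin_a: "sin a > 0"
    using a0 \<open>a \<le> pi\<close> ha assms(1) by (intro sin_gt_zero) (auto simp: a_def field_simps)
  have sin_p: "sin p \<ge> 0"
    using assms(2,3) \<open>a \<le> pi\<close> by (intro sin_ge_zero) (auto simp: a_def)
  have Sa: "sin a * S a = 1"
    using sin_nat_mult_eq_sin_mult_sum_cos[of h a] ha by (simp add: S_def)
  have "S a \<le> S p"
    unfolding S_def
  proof (rule sum_mono)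
    fix k assume "k \<in> {..<h}"
    define m where "m = \<bar>real h - 1 - 2 * real k\<bar>"
    have "m \<le> real h" using \<open>k \<in> {..<h}\<close> by (auto simp: m_def)
    have cos_abs: "cos ((real h - 1 - 2 * real k) * q) = cos (m * q)" for q
      by (simp add: m_def abs_if) (metis cos_minus minus_diff_eq mult_minus_left)
    have "m * a \<le> real h * a" using \<open>m \<le> real h\<close> a0 by (intro mult_right_mono) auto
    moreover have "m * p \<le> m * a" using assms(3) by (intro mult_left_mono) (auto simp: m_def a_def)
    moreover have "0 \<le> m * p" using assms(2) by (simp add: m_def)
    ultimately show "cos ((real h - 1 - 2 * real k) * a) \<le> cos ((real h - 1 - 2 * real k) * p)"
      unfolding cos_abs using ha pi_gt_zero by (intro cos_monotone_0_pi_le) auto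
  qed
  have "sin p = sin a * (sin p * S a)" using Sa by simp
  also have "\<dots> \<le> sin a * (sin p * S p)"
    using sin_a sin_p \<open>S a \<le> S p\<close> by (intro mult_left_mono) auto
  also have "sin p * S p = sin (real h * p)"
    using sin_nat_mult_eq_sin_mult_sum_cos[of h p] by (simp add: S_def)
  finally show ?thesis by (simp add: a_def)
qed

lemma cos_ge_interpolation_cos_nat_mult:
  assumes "h \<ge> 1" and "\<bar>t\<bar> \<le> pi / real h"
  shows "cos (pi / real h) + (1 - cos (pi / real h)) * (1 + cos (real h * t)) / 2 \<le> cos t"
proof -
  define p where "p = \<bar>t\<bar> / 2"
  define a where "a = pi / (2 * real h)"
  have "0 \<le> p" and "p \<le> a"
    using assms(2) by (auto simp: p_def a_def field_simps)
  have "a \<le> pi" using assms(1) pi_gt_zero by (simp add: a_def field_simps)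
  have "sin p \<ge> 0" using \<open>0 \<le> p\<close> \<open>p \<le> a\<close> \<open>a \<le> pi\<close> by (intro sin_ge_zero) auto
  moreover have "sin p \<le> sin a * sin (real h * p)"
    using sin_le_sin_pi_half_div_mult_sin_nat_mult[OF assms(1) \<open>0 \<le> p\<close>] \<open>p \<le> a\<close>
    by (simp add: a_def)
  ultimately have sq: "(sin p)\<^sup>2 \<le> (sin a * sin (real h * p))\<^sup>2"
    by (intro power_mono) auto
  have cos_t: "cos t = 1 - 2 * (sin p)\<^sup>2"
    using cos_double_sin[of p] by (simp add: p_def)
  have cos_c: "cos (pi / real h) = 1 - 2 * (sin a)\<^sup>2"
    using cos_double_sin[of a] by (simp add: a_def)
  have "cos (real h * t) = cos \<bar>real h * t\<bar>" by simp
  also have "\<bar>real h * t\<bar> = 2 * (real h * p)" by (simp add: p_def abs_mult)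
  finally have cos_ht: "cos (real h * t) = 1 - 2 * (sin (real h * p))\<^sup>2"
    by (simp add: cos_double_sin)
  show ?thesis
    unfolding cos_t cos_c cos_ht using sq by (simp add: power_mult_distrib algebra_simps) argo
qed

lemma cos_pi_div_bounds:
  assumes "h \<ge> 3"
  shows "0 < cos (pi / real h)" and "cos (pi / real h) < 1"
proof -
  have "0 < pi / real h" and "pi / real h \<le> pi / 3"
    using assms pi_gt_zero by (auto simp: field_simps)
  then show "0 < cos (pi / real h)"
    using pi_gt_zero by (intro cos_gt_zero) linarith+
  show "cos (pi / real h) < 1"
    using cos_mono_less_eq[of "pi / real h" 0] \<open>0 < pi / real h\<close> \<open>pi / real h \<le> pi / 3\<close>
    by simp
qed

definition node :: "nat \<Rightarrow> nat \<Rightarrow> nat \<Rightarrow> real" where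
  "node N h a = (real a - (real N + 1) / 2) * (2 * pi / (real h * real N))"

lemma wF_eq_sum_node: "wF N h F A = (\<Sum>a\<in>A. F (node N h a))"
  by (simp add: wF_def node_def)

lemma abs_node_le:
  assumes "N \<ge> 1" and "a \<in> {1..N}"
  shows "\<bar>node N h a\<bar> \<le> pi / real h"
proof -
  have "\<bar>real a - (real N + 1) / 2\<bar> \<le> real N / 2"
    using assms(2) by (auto simp: abs_le_iff field_simps)
  hence "\<bar>real a - (real N + 1) / 2\<bar> * (2 * pi / (real h * real N))
         \<le> real N / 2 * (2 * pi / (real h * real N))"
    by (intro mult_right_mono) auto
  also have "\<dots> = pi / real h" using assms(1) by (simp add: field_simps)
  finally show ?thesis using pi_gt_zero by (simp add: node_def abs_mult)
qed

lemma abs_cospoly_le: "\<bar>cospoly K b x\<bar> \<le> (\<Sum>j=1..K. \<bar>b j\<bar>)"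
proof -
  have "\<bar>cospoly K b x\<bar> \<le> (\<Sum>j=1..K. \<bar>b j * cos (real j * x)\<bar>)"
    unfolding cospoly_def by (rule sum_abs)
  also have "\<dots> \<le> (\<Sum>j=1..K. \<bar>b j\<bar>)"
    by (intro sum_mono) (simp add: abs_mult mult_left_le)
  finally show ?thesis .
qed

lemma scaled_cos_in_Fam:
  assumes "k \<in> {1..K}" and "\<bar>u\<bar> = 1 / cos (pi / real h)"
  shows "(\<lambda>x. u * cos (real k * x)) \<in> Fam K h"
proof -
  define b where "b j = (if j = k then u else 0)" for j :: nat
  have "(\<Sum>j=1..K. \<bar>b j\<bar>) = (\<Sum>j=1..K. if j = k then \<bar>u\<bar> else 0)"
    by (rule sum.cong) (auto simp: b_def)
  also have "\<dots> = 1 / cos (pi / real h)" using assms by simp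
  finally have "(\<Sum>j=1..K. \<bar>b j\<bar>) = 1 / cos (pi / real h)" .
  moreover have "cospoly K b = (\<lambda>x. u * cos (real k * x))"
  proof
    fix x
    have "cospoly K b x = (\<Sum>j=1..K. if j = k then u * cos (real k * x) else 0)"
      unfolding cospoly_def by (rule sum.cong) (auto simp: b_def)
    also have "\<dots> = u * cos (real k * x)" using assms(1) by simp
    finally show "cospoly K b x = u * cos (real k * x)" .
  qed
  ultimately show ?thesis unfolding Fam_def by auto
qed

lemma average_le_Sup_Fam:
  assumes "finite A" and "A \<noteq> {}" and "F \<in> Fam K h"
  shows "wF N h F A / real (card A) \<le> Sup ((\<lambda>F. wF N h F A / real (card A)) ` Fam K h)"
proof (rule cSup_upper)
  show "wF N h F A / real (card A) \<in> (\<lambda>F. wF N h F A / real (card A)) ` Fam K h"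
    using assms(3) by blast
  have "card A > 0" using assms(1,2) by (simp add: card_gt_0_iff)
  have "wF N h G A / real (card A) \<le> 1 / cos (pi / real h)" if "G \<in> Fam K h" for G
  proof -
    obtain b where b: "(\<Sum>j=1..K. \<bar>b j\<bar>) = 1 / cos (pi / real h)" "G = cospoly K b"
      using \<open>G \<in> Fam K h\<close> unfolding Fam_def by blast
    have "wF N h G A \<le> real (card A) * (1 / cos (pi / real h))"
      unfolding wF_def
      by (rule sum_bounded_above) (metis abs_cospoly_le abs_le_D1 b)
    thus ?thesis using \<open>card A > 0\<close> by (simp add: field_simps)
  qed
  then show "bdd_above ((\<lambda>F. wF N h F A / real (card A)) ` Fam K h)"
    by (rule bdd_aboveI2)
qed

lemma max_test_sums_ge:
  fixes c n C1 Ch :: real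
  assumes "c < 1" and "C1 \<ge> n * c + (1 - c) * (n + Ch) / 2"
  shows "(1 + c) / (3 - c) * n \<le> max C1 (- Ch)"
proof (cases "Ch \<le> - (1 + c) / (3 - c) * n")
  case False
  have "n - (1 + c) / (3 - c) * n \<le> n + Ch" using False by linarith
  hence "(1 - c) * (n - (1 + c) / (3 - c) * n) / 2 \<le> (1 - c) * (n + Ch) / 2"
    using assms(1) by (intro divide_right_mono mult_left_mono) auto
  moreover have "n * c + (1 - c) * (n - (1 + c) / (3 - c) * n) / 2 = (1 + c) / (3 - c) * n"
    using assms(1) by (simp add: field_simps)
  ultimately show ?thesis using assms(2) by linarith
next
  case True
  hence "(1 + c) / (3 - c) * n \<le> - Ch" by linarith
  thus ?thesis by simp
qed

lemma average_bound_for_subset: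
  assumes "h \<ge> 3" and "N \<ge> 1" and A: "A \<subseteq> {1..N}" "A \<noteq> {}"
  shows "(1 + cos (pi / real h)) / (3 - cos (pi / real h)) / cos (pi / real h)
         \<le> Sup ((\<lambda>F. wF N h F A / real (card A)) ` Fam h h)"
    (is "?T / ?c \<le> ?S")
proof -
  have "finite A" using A finite_subset by blast
  define n where "n = real (card A)"
  have "n > 0" using \<open>finite A\<close> A by (simp add: n_def card_gt_0_iff)
  have "0 < ?c" "?c < 1" using cos_pi_div_bounds[OF assms(1)] by auto
  define C1 where "C1 = (\<Sum>a\<in>A. cos (node N h a))"
  define Ch where "Ch = (\<Sum>a\<in>A. cos (real h * node N h a))"
  have "(\<Sum>a\<in>A. ?c + (1 - ?c) * (1 + cos (real h * node N h a)) / 2) \<le> C1"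
    unfolding C1_def using assms abs_node_le
    by (intro sum_mono cos_ge_interpolation_cos_nat_mult) auto
  moreover have "(\<Sum>a\<in>A. ?c + (1 - ?c) * (1 + cos (real h * node N h a)) / 2)
               = n * ?c + (1 - ?c) * (n + Ch) / 2"
    by (simp add: sum.distrib n_def Ch_def sum_divide_distrib[symmetric]
        sum_distrib_left[symmetric])
  ultimately have "?T * n \<le> max C1 (- Ch)"
    using \<open>?c < 1\<close> by (intro max_test_sums_ge) auto
  have "C1 / ?c / n \<le> ?S"
  proof -
    have "(\<lambda>x. 1 / ?c * cos (real 1 * x)) \<in> Fam h h"
      using assms(1) \<open>0 < ?c\<close> by (intro scaled_cos_in_Fam) auto
    from average_le_Sup_Fam[OF \<open>finite A\<close> \<open>A \<noteq> {}\<close> this, of N]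
    show ?thesis by (simp add: wF_eq_sum_node C1_def n_def sum_divide_distrib)
  qed
  moreover have "- Ch / ?c / n \<le> ?S"
  proof -
    have "(\<lambda>x. - 1 / ?c * cos (real h * x)) \<in> Fam h h"
      using assms(1) \<open>0 < ?c\<close> by (intro scaled_cos_in_Fam) auto
    from average_le_Sup_Fam[OF \<open>finite A\<close> \<open>A \<noteq> {}\<close> this, of N]
    show ?thesis by (simp add: wF_eq_sum_node Ch_def n_def sum_divide_distrib sum_negf)
  qed
  ultimately have "max C1 (- Ch) / ?c / n \<le> ?S"
    by (simp add: max_def)
  moreover have "?T * n / ?c / n \<le> max C1 (- Ch) / ?c / n"
    using \<open>?T * n \<le> max C1 (- Ch)\<close> \<open>0 < ?c\<close> \<open>n > 0\<close> by (intro divide_right_mono) auto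
  moreover have "?T * n / ?c / n = ?T / ?c" using \<open>n > 0\<close> by simp
  ultimately show ?thesis by linarith
qed

theorem mainTheorem7:
  fixes N h :: nat
  assumes "h \<ge> 3" and "N \<ge> 1"
  shows "psi N h h \<ge> (1 / cos (pi / real h)) * (4 / (3 - cos (pi / real h)) - 1)"
proof -
  let ?c = "cos (pi / real h)"
  have "(1 / ?c) * (4 / (3 - ?c) - 1) = (1 + ?c) / (3 - ?c) / ?c"
    using cos_pi_div_bounds[OF assms(1)] by (simp add: field_simps)
  also have "\<dots> \<le> psi N h h"
    unfolding psi_def using assms average_bound_for_subset
    by (subst Min_ge_iff) auto
  finally show ?thesis .
qed

end
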